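(* Let $V$ be a finite-dimensional real representation of $SO(3)$ and $v\in V$. Then $\dim\mathbf{Cov}_1(v)\in\{0,1,3\}$, and the symmetry class of $\mathbf{Cov}_1(v)$ is: $[SO(3)]$ iff $\mathbf{Cov}_1(v)=\{0\}$; $[SO(2)]$ iff $\dim\mathbf{Cov}_1(v)=1$; the trivial class $[\{1\}]$ iff $\dim\mathbf{Cov}_1(v)=3$.
   Context: $\mathbf{Cov}_1(v)\subset\mathbb{R}^3$ is the set of values at $v$ of all $SO(3)$-equivariant polynomial maps $V\to\mathbb{R}^3$ (standard action on $\mathbb{R}^3$); it is a linear subspace. The symmetry group of a subspace $F\subset\mathbb{R}^3$ is $\{g\in SO(3): gx=x\ \forall x\in F\}$ and its symmetry class is the conjugacy class of this group in $SO(3)$. $SO(2)$ denotes the group of rotations about the $z$-axis. *)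

theory Defs
  imports "HOL-Analysis.Analysis"
begin

definition SO3 :: "(real^3^3) set" where
  "SO3 = {g. orthogonal_matrix g \<and> det g = 1}"

definition SO2z :: "(real^3^3) set" where
  "SO2z = {g \<in> SO3. g *v axis (3::3) 1 = axis (3::3) 1}"

definition is_rep :: "(real^3^3 \<Rightarrow> real^'n^'n) \<Rightarrow> bool" where
  "is_rep \<rho> \<longleftrightarrow> continuous_on SO3 \<rho> \<and> \<rho> (mat 1) = mat 1 \<and>
     (\<forall>g\<in>SO3. \<forall>h\<in>SO3. \<rho> (g ** h) = \<rho> g ** \<rho> h)"

inductive poly_fun :: "(real^'n \<Rightarrow> real) \<Rightarrow> bool" where
  pf_const: "poly_fun (\<lambda>x. c)"
| pf_coord: "poly_fun (\<lambda>x. x $ i)"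
| pf_add: "poly_fun f \<Longrightarrow> poly_fun g \<Longrightarrow> poly_fun (\<lambda>x. f x + g x)"
| pf_mult: "poly_fun f \<Longrightarrow> poly_fun g \<Longrightarrow> poly_fun (\<lambda>x. f x * g x)"

definition poly_map :: "(real^'n \<Rightarrow> real^'m) \<Rightarrow> bool" where
  "poly_map f \<longleftrightarrow> (\<forall>i. poly_fun (\<lambda>x. f x $ i))"

definition equivariant_poly :: "(real^3^3 \<Rightarrow> real^'n^'n) \<Rightarrow> (real^'n \<Rightarrow> real^3) \<Rightarrow> bool" where
  "equivariant_poly \<rho> f \<longleftrightarrow> poly_map f \<and> (\<forall>g\<in>SO3. \<forall>x. f (\<rho> g *v x) = g *v f x)"

definition Cov1 :: "(real^3^3 \<Rightarrow> real^'n^'n) \<Rightarrow> real^'n \<Rightarrow> (real^3) set" where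
  "Cov1 \<rho> v = {f v | f. equivariant_poly \<rho> f}"

definition sym_group :: "(real^3) set \<Rightarrow> (real^3^3) set" where
  "sym_group F = {g \<in> SO3. \<forall>x\<in>F. g *v x = x}"

text \<open>The symmetry class of F is the conjugacy class [H] (conjugation inside SO(3)).\<close>
definition has_sym_class :: "(real^3) set \<Rightarrow> (real^3^3) set \<Rightarrow> bool" where
  "has_sym_class F H \<longleftrightarrow> (\<exists>k\<in>SO3. sym_group F = (\<lambda>h. k ** h ** transpose k) ` H)"

end

theory Submission
  imports Defs "HOL-Analysis.Cross3"
begin

(* Equivariant maps into R^3 can be multiplied by the cross product, because rotations
   preserve it; hence Cov1(v) is a linear subspace of R^3 closed under the cross product.
   A plane is never closed under the cross product (a x b is orthogonal to a and b, and
   nonzero for independent a, b), so the dimension is 0, 1 or 3. The pointwise stabiliser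
   of {0}, of a line R u and of R^3 is SO(3), the conjugate of SO(2) by a rotation taking
   the z-axis to u, and the trivial group; these three classes are pairwise distinct. *)

unbundle cross3_syntax

lemma SO3_iff_rotation_matrix: "g \<in> SO3 \<longleftrightarrow> rotation_matrix g"
  by (simp add: SO3_def rotation_matrix_def)

lemma mat_1_in_SO3: "mat 1 \<in> SO3"
  by (simp add: SO3_def orthogonal_matrix_id)

lemma matrix_mul_in_SO3: "g \<in> SO3 \<Longrightarrow> h \<in> SO3 \<Longrightarrow> g ** h \<in> SO3"
  by (simp add: SO3_def orthogonal_matrix_mul det_mul)

lemma transpose_in_SO3: "g \<in> SO3 \<Longrightarrow> transpose g \<in> SO3"
  by (simp add: SO3_def orthogonal_matrix_transpose det_transpose)

lemma SO3_transpose_cancel: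
  assumes "k \<in> SO3"
  shows "transpose k ** k = mat 1" "k ** transpose k = mat 1"
    "transpose k ** (k ** h) = h" "k ** (transpose k ** h) = h"
  using assms by (simp_all add: SO3_def orthogonal_matrix_def matrix_mul_assoc)

lemma SO2z_subset_SO3: "SO2z \<subseteq> SO3"
  by (auto simp: SO2z_def)

lemma SO2z_ne_SO3: "SO2z \<noteq> SO3"
proof -
  define d :: "real^3^3" where "d = (\<chi> i j. if i = j then (if i = 1 then 1 else -1) else 0)"
  have "d \<in> SO3"
    unfolding SO3_def orthogonal_matrix_def d_def
    by (simp add: det_3 vec_eq_iff matrix_matrix_mult_def sum_3 forall_3 mat_def transpose_def)
  moreover have "d \<notin> SO2z"
    unfolding SO2z_def d_def by (simp add: vec_eq_iff matrix_vector_mult_def sum_3 forall_3 axis_def)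
  ultimately show ?thesis by blast
qed

lemma SO2z_ne_trivial: "SO2z \<noteq> {mat 1}"
proof -
  define d :: "real^3^3" where "d = (\<chi> i j. if i = j then (if i = 3 then 1 else -1) else 0)"
  have "d \<in> SO3"
    unfolding SO3_def orthogonal_matrix_def d_def
    by (simp add: det_3 vec_eq_iff matrix_matrix_mult_def sum_3 forall_3 mat_def transpose_def)
  then have "d \<in> SO2z"
    unfolding SO2z_def d_def by (simp add: vec_eq_iff matrix_vector_mult_def sum_3 forall_3 axis_def)
  moreover have "d \<noteq> mat 1"
    unfolding d_def by (simp add: vec_eq_iff forall_3 mat_def)
  ultimately show ?thesis by blast
qed

lemma SO3_ne_trivial: "SO3 \<noteq> {mat 1}"
proof
  assume "SO3 = {mat 1}"
  moreover have "mat 1 \<in> SO2z" by (simp add: SO2z_def mat_1_in_SO3)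
  ultimately have "SO2z = {mat 1}" using SO2z_subset_SO3 by blast
  then show False using SO2z_ne_trivial by blast
qed

lemma poly_fun_diff: "poly_fun f \<Longrightarrow> poly_fun g \<Longrightarrow> poly_fun (\<lambda>x. f x - g x)"
  using pf_add[OF _ pf_mult[OF pf_const[of "-1"]], of f g] by simp

lemma equivariant_poly_zero: "equivariant_poly \<rho> (\<lambda>x. 0)"
  by (simp add: equivariant_poly_def poly_map_def pf_const)

lemma equivariant_poly_add:
  "equivariant_poly \<rho> f \<Longrightarrow> equivariant_poly \<rho> g \<Longrightarrow> equivariant_poly \<rho> (\<lambda>x. f x + g x)"
  by (simp add: equivariant_poly_def poly_map_def pf_add matrix_vector_right_distrib)

lemma equivariant_poly_scaleR: "equivariant_poly \<rho> f \<Longrightarrow> equivariant_poly \<rho> (\<lambda>x. c *\<^sub>R f x)"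
  by (simp add: equivariant_poly_def poly_map_def pf_mult[OF pf_const] matrix_vector_mult_scaleR)

lemma equivariant_poly_cross:
  assumes f: "equivariant_poly \<rho> f" and g: "equivariant_poly \<rho> g"
  shows "equivariant_poly \<rho> (\<lambda>x. f x \<times> g x)"
proof -
  have "poly_fun (\<lambda>x. f x $ i)" "poly_fun (\<lambda>x. g x $ i)" for i
    using f g by (auto simp: equivariant_poly_def poly_map_def)
  then have "poly_fun (\<lambda>x. (f x \<times> g x) $ i)" for i
    using exhaust_3[of i] by (auto simp: cross_components intro!: poly_fun_diff pf_mult)
  moreover have "f (\<rho> h *v x) \<times> g (\<rho> h *v x) = h *v (f x \<times> g x)" if "h \<in> SO3" for h x
    using f g that by (simp add: equivariant_poly_def cross_rotation_matrix SO3_iff_rotation_matrix)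
  ultimately show ?thesis
    by (simp add: equivariant_poly_def poly_map_def)
qed

lemma subspace_Cov1: "subspace (Cov1 \<rho> v)"
  unfolding subspace_def Cov1_def
proof (intro conjI ballI allI)
  show "0 \<in> {f v |f. equivariant_poly \<rho> f}"
    using equivariant_poly_zero by force
next
  fix x y assume "x \<in> {f v |f. equivariant_poly \<rho> f}" "y \<in> {f v |f. equivariant_poly \<rho> f}"
  then show "x + y \<in> {f v |f. equivariant_poly \<rho> f}"
    using equivariant_poly_add by force
next
  fix c x assume "x \<in> {f v |f. equivariant_poly \<rho> f}"
  then show "c *\<^sub>R x \<in> {f v |f. equivariant_poly \<rho> f}"
    using equivariant_poly_scaleR by force
qed

lemma cross_mem_Cov1: "a \<in> Cov1 \<rho> v \<Longrightarrow> b \<in> Cov1 \<rho> v \<Longrightarrow> a \<times> b \<in> Cov1 \<rho> v"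
  unfolding Cov1_def by (auto intro: equivariant_poly_cross)

lemma cross_mem_span_pair_imp_zero:
  fixes a b :: "real^3"
  assumes "a \<times> b \<in> span {a, b}"
  shows "a \<times> b = 0"
proof -
  have "orthogonal (a \<times> b) (a \<times> b)"
    by (rule orthogonal_to_span[OF assms]) (auto simp: orthogonal_cross)
  then show ?thesis by (simp add: orthogonal_self)
qed

lemma dim_cross_closed_subspace:
  fixes F :: "(real^3) set"
  assumes "subspace F" and cross_closed: "\<And>a b. a \<in> F \<Longrightarrow> b \<in> F \<Longrightarrow> a \<times> b \<in> F"
  shows "dim F \<in> {0, 1, 3}"
proof -
  have "dim F \<noteq> 2"
  proof
    assume "dim F = 2"
    obtain B where B: "B \<subseteq> F" "independent B" "F \<subseteq> span B" "card B = dim F"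
      using basis_exists by blast
    then obtain a b where ab: "B = {a, b}" "a \<noteq> b"
      using \<open>dim F = 2\<close> by (metis card_2_iff)
    have "a \<times> b = 0"
      using B ab cross_closed by (intro cross_mem_span_pair_imp_zero) blast
    then have "a = 0 \<or> b = 0 \<or> b \<in> span {a}"
      by (auto simp: cross_eq_0 collinear_lemma span_singleton)
    moreover have "a \<noteq> 0" "b \<noteq> 0"
      using B(2) ab dependent_zero by blast+
    moreover have "independent (insert b {a})"
      using B(2) ab(1) by (simp add: insert_commute)
    then have "b \<notin> span {a}"
      using ab(2) by (simp add: independent_insert)
    ultimately show False by blast
  qed
  moreover have "dim F \<le> 3"
    using dim_subset_UNIV[of F] by simp
  ultimately have "dim F = 0 \<or> dim F = 1 \<or> dim F = 3"
    by linarith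
  then show ?thesis by blast
qed

lemma subspace_dim_1_obtains_span_singleton:
  assumes "subspace F" "dim F = 1"
  obtains u where "u \<noteq> 0" "F = span {u}"
proof -
  obtain B where B: "B \<subseteq> F" "independent B" "F \<subseteq> span B" "card B = dim F"
    using basis_exists by blast
  then obtain u where "B = {u}"
    using assms(2) by (metis card_1_singletonE)
  moreover have "span B \<subseteq> F"
    using B(1) assms(1) by (simp add: span_minimal)
  ultimately show thesis
    using that B by (auto simp: dependent_zero)
qed

definition conj_by :: "real^3^3 \<Rightarrow> (real^3^3) set \<Rightarrow> (real^3^3) set" where
  "conj_by k H = (\<lambda>h. k ** h ** transpose k) ` H"

lemma has_sym_class_iff_conj_by: "has_sym_class F H \<longleftrightarrow> (\<exists>k\<in>SO3. sym_group F = conj_by k H)"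
  by (simp add: has_sym_class_def conj_by_def)

lemma mem_conj_by_iff:
  assumes "k \<in> SO3"
  shows "g \<in> conj_by k H \<longleftrightarrow> transpose k ** g ** k \<in> H"
proof
  assume "g \<in> conj_by k H"
  then obtain h where "h \<in> H" "g = k ** h ** transpose k" by (auto simp: conj_by_def)
  then show "transpose k ** g ** k \<in> H"
    by (simp add: SO3_transpose_cancel[OF assms] matrix_mul_assoc[symmetric])
next
  assume "transpose k ** g ** k \<in> H"
  moreover have "g = k ** (transpose k ** g ** k) ** transpose k"
    by (simp add: SO3_transpose_cancel[OF assms] matrix_mul_assoc[symmetric])
  ultimately show "g \<in> conj_by k H" unfolding conj_by_def by blast
qed

lemma conj_by_conj_by_transpose:
  assumes "k \<in> SO3"
  shows "conj_by (transpose k) (conj_by k H) = H"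
  by (simp add: conj_by_def image_image SO3_transpose_cancel[OF assms] matrix_mul_assoc[symmetric])

lemma conj_by_eq_iff: "k \<in> SO3 \<Longrightarrow> conj_by k A = conj_by k B \<longleftrightarrow> A = B"
  by (metis conj_by_conj_by_transpose)

lemma conj_by_SO3:
  assumes "k \<in> SO3"
  shows "conj_by k SO3 = SO3"
proof (intro subset_antisym subsetI)
  fix g assume "g \<in> conj_by k SO3"
  then show "g \<in> SO3"
    using assms by (auto simp: conj_by_def intro!: matrix_mul_in_SO3 transpose_in_SO3)
next
  fix g assume "g \<in> SO3"
  then show "g \<in> conj_by k SO3"
    using assms by (simp add: mem_conj_by_iff matrix_mul_in_SO3 transpose_in_SO3)
qed

lemma conj_by_trivial: "k \<in> SO3 \<Longrightarrow> conj_by k {mat 1} = {mat 1}"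
  by (simp add: conj_by_def SO3_transpose_cancel)

lemma has_sym_class_SO3_iff: "has_sym_class F SO3 \<longleftrightarrow> sym_group F = SO3"
  by (metis has_sym_class_iff_conj_by conj_by_SO3 mat_1_in_SO3)

lemma has_sym_class_trivial_iff: "has_sym_class F {mat 1} \<longleftrightarrow> sym_group F = {mat 1}"
  by (metis has_sym_class_iff_conj_by conj_by_trivial mat_1_in_SO3)

lemma has_sym_class_SO2z_imp:
  assumes "has_sym_class F SO2z"
  shows "sym_group F \<noteq> SO3" "sym_group F \<noteq> {mat 1}"
proof -
  obtain k where k: "k \<in> SO3" "sym_group F = conj_by k SO2z"
    using assms by (auto simp: has_sym_class_iff_conj_by)
  show "sym_group F \<noteq> SO3"
    using k SO2z_ne_SO3 by (metis conj_by_SO3 conj_by_eq_iff)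
  show "sym_group F \<noteq> {mat 1}"
    using k SO2z_ne_trivial by (metis conj_by_trivial conj_by_eq_iff)
qed

lemma sym_group_zero: "sym_group {0} = SO3"
  by (auto simp: sym_group_def)

lemma sym_group_UNIV: "sym_group UNIV = {mat 1}"
  by (auto simp: sym_group_def mat_1_in_SO3 matrix_eq)

lemma sym_group_span_singleton: "sym_group (span {u}) = {g \<in> SO3. g *v u = u}"
  by (auto simp: sym_group_def span_singleton matrix_vector_mult_scaleR)

lemma stabiliser_mult_eq_conj_by:
  assumes "k \<in> SO3"
  shows "{g \<in> SO3. g *v (k *v a) = k *v a} = conj_by k {g \<in> SO3. g *v a = a}"
proof -
  have "g *v (k *v a) = k *v a \<longleftrightarrow> (transpose k ** g ** k) *v a = a" for g
    by (metis SO3_transpose_cancel(1,2)[OF assms] matrix_vector_mul_assoc matrix_vector_mul_lid)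
  moreover have "g \<in> SO3 \<longleftrightarrow> transpose k ** g ** k \<in> SO3" for g
    using assms mem_conj_by_iff conj_by_SO3 by blast
  ultimately show ?thesis
    using assms by (auto simp: mem_conj_by_iff)
qed

lemma has_sym_class_line:
  fixes u :: "real^3"
  assumes "u \<noteq> 0"
  shows "has_sym_class (span {u}) SO2z"
proof -
  have "norm (u /\<^sub>R norm u) = 1" using assms by simp
  then obtain k where k: "rotation_matrix k" "k *v axis (3::3) 1 = u /\<^sub>R norm u"
    using rotation_matrix_exists_basis[of "u /\<^sub>R norm u"] by auto
  have "k \<in> SO3" using k(1) by (simp add: SO3_iff_rotation_matrix)
  have "g *v u = u \<longleftrightarrow> g *v (u /\<^sub>R norm u) = u /\<^sub>R norm u" for g :: "real^3^3"
    using assms by (auto simp: matrix_vector_mult_scaleR)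
  then have "sym_group (span {u}) = {g \<in> SO3. g *v (k *v axis 3 1) = k *v axis 3 1}"
    by (simp add: sym_group_span_singleton k(2))
  also have "\<dots> = conj_by k SO2z"
    using stabiliser_mult_eq_conj_by[OF \<open>k \<in> SO3\<close>] by (simp add: SO2z_def)
  finally show ?thesis
    using \<open>k \<in> SO3\<close> by (auto simp: has_sym_class_iff_conj_by)
qed

lemma has_sym_class_subspace:
  fixes F :: "(real^3) set"
  assumes "subspace F" "dim F \<in> {0, 1, 3}"
  shows "(has_sym_class F SO3 \<longleftrightarrow> F = {0})
    \<and> (has_sym_class F SO2z \<longleftrightarrow> dim F = 1)
    \<and> (has_sym_class F {mat 1} \<longleftrightarrow> dim F = 3)"
proof -
  consider "dim F = 0" | "dim F = 1" | "dim F = 3"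
    using assms(2) by auto
  then show ?thesis
  proof cases
    case 1
    then have "F = {0}"
      using subspace_0[OF assms(1)] by auto
    then have "sym_group F = SO3"
      by (simp add: sym_group_zero)
    then show ?thesis
      using \<open>F = {0}\<close> SO3_ne_trivial has_sym_class_SO2z_imp(1)
      by (auto simp: has_sym_class_SO3_iff has_sym_class_trivial_iff)
  next
    case 2
    then obtain u where "u \<noteq> 0" "F = span {u}"
      using subspace_dim_1_obtains_span_singleton assms(1) by blast
    then have "has_sym_class F SO2z"
      by (simp add: has_sym_class_line)
    then show ?thesis
      using 2 has_sym_class_SO2z_imp by (auto simp: has_sym_class_SO3_iff has_sym_class_trivial_iff)
  next
    case 3
    then have "F = UNIV"
      using dim_eq_full[of F] span_eq_iff[of F] assms(1) by simp
    then have "sym_group F = {mat 1}"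
      by (simp add: sym_group_UNIV)
    then show ?thesis
      using 3 SO3_ne_trivial has_sym_class_SO2z_imp(2)
      by (auto simp: has_sym_class_SO3_iff has_sym_class_trivial_iff)
  qed
qed

theorem proposition7p1:
  fixes \<rho> :: "real^3^3 \<Rightarrow> real^'n^'n" and v :: "real^'n"
  assumes "is_rep \<rho>"
  shows "dim (Cov1 \<rho> v) \<in> {0, 1, 3}
    \<and> (has_sym_class (Cov1 \<rho> v) SO3 \<longleftrightarrow> Cov1 \<rho> v = {0})
    \<and> (has_sym_class (Cov1 \<rho> v) SO2z \<longleftrightarrow> dim (Cov1 \<rho> v) = 1)
    \<and> (has_sym_class (Cov1 \<rho> v) {mat 1} \<longleftrightarrow> dim (Cov1 \<rho> v) = 3)"
proof -
  have "dim (Cov1 \<rho> v) \<in> {0, 1, 3}"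
    using dim_cross_closed_subspace[OF subspace_Cov1 cross_mem_Cov1] .
  then show ?thesis
    using has_sym_class_subspace[OF subspace_Cov1] by blast
qed

end
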